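(* Let $\mathbf H$ be a Hopf submonoid of $\mathbf{GP}$ spanned by a family of generalized permutahedra, let $\Bbbk$ be a field of characteristic $0$, and let $\zeta$ be a character of $\mathbf H$ with values in $\Bbbk$ such that each $\zeta_I:\mathbf H[I]\to\Bbbk$ is a strong valuation. Then for every finite set $I$ the three linear maps on $\mathbf H[I]$ $$x\mapsto f_\zeta(x)(t),\qquad x\mapsto\Phi_\zeta(x),\qquad x\mapsto O_\zeta(x)$$ are strong valuations.
   Context: $\mathbf{GP}$ is the Hopf monoid of (bounded) generalized permutahedra: $\mathbf{GP}[I]$ has basis the polytopes $P=\{x\in\mathbb R^I:\sum_{i\in I}x_i=z(I),\ \sum_{i\in A}x_i\le z(A)\ \forall A\subseteq I\}$ for submodular $z:2^I\to\mathbb R$; product $P\cdot Q=P\times Q$; coproduct $\Delta_{S,T}(P)=P|_S\otimes P/_S$ where $P|_S\times P/_S$ is the face of $P$ maximizing $\sum_{i\in S}x_i$. Iterated coproducts $\Delta_{S_1,\dots,S_k}$ are defined by coassociativity. A character $\zeta$ is a family of linear maps $\zeta_I:\mathbf H[I]\to\Bbbk$, natural under bijections, with $\zeta_I(x_1\cdots x_k)=\zeta_{S_1}(x_1)\cdots\zeta_{S_k}(x_k)$ for $x_i\in\mathbf H[S_i]$, $I=S_1\sqcup\dots\sqcup S_k$, and $\zeta_\emptyset(1)=1$. For $x\in\mathbf H[I]$ and integers $k\ge1$ let $\zeta^{*k}(x)=\sum_{S_1\sqcup\cdots\sqcup S_k=I}(\zeta_{S_1}\otimes\cdots\otimes\zeta_{S_k})(\Delta_{S_1,\dots,S_k}(x))$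 (sum over set decompositions with possibly empty parts, tensor product of scalars multiplied); $f_\zeta(x)(t)\in\Bbbk[t]$ is the unique polynomial with $f_\zeta(x)(k)=\zeta^{*k}(x)$ for all positive integers $k$. $\Phi_\zeta(x)=\sum_{(S_1,\dots,S_k)}(\zeta_{S_1}\otimes\cdots\otimes\zeta_{S_k})(\Delta_{S_1,\dots,S_k}(x))\,M_{(|S_1|,\dots,|S_k|)}$, a quasisymmetric function, summing over all ordered set partitions of $I$ into nonempty blocks, where $M_\alpha$ denotes the monomial quasisymmetric function. $O_\zeta(x)$ is the same sum with $M_{(|S_1|,\dots,|S_k|)}$ replaced by the basis element $[S_1|\cdots|S_k]$ of the vector space with basis the ordered set partitions of $I$. For $\mathbf H$ spanned by a family of polytopes, a linear map $f:\mathbf H[I]\to A$ is a strong valuation if there is linear $\hat f$ on the span $\mathbb I(\mathbf H)[I]$ of indicator functions $\mathbb 1_P$ ($P$ in the family) with $f(P)=\hat f(\mathbb 1_P)$ for all such $P$. *)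

theory Defs
  imports Main "HOL-Computational_Algebra.Polynomial" "HOL-Library.Function_Algebras"
begin

text \<open>Points of R^I are functions 'a => real vanishing outside I; a polytope in R^I is a
  set of such functions. Since a polytope does not determine its ground set I, all
  species-level data (families, characters) take the ground set as an extra argument.\<close>

type_synonym 'a pt = "'a \<Rightarrow> real"

definition submodular_on :: "'a set \<Rightarrow> ('a set \<Rightarrow> real) \<Rightarrow> bool" where
  "submodular_on I z \<longleftrightarrow> z {} = 0 \<and>
     (\<forall>A B. A \<subseteq> I \<longrightarrow> B \<subseteq> I \<longrightarrow> z (A \<union> B) + z (A \<inter> B) \<le> z A + z B)"

definition gen_perm :: "'a set \<Rightarrow> ('a set \<Rightarrow> real) \<Rightarrow> 'a pt set" where
  "gen_perm I z = {x. (\<forall>i. i \<notin> I \<longrightarrow> x i = 0) \<and> (\<Sum>i\<in>I. x i) = z I \<and>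
                      (\<forall>A. A \<subseteq> I \<longrightarrow> (\<Sum>i\<in>A. x i) \<le> z A)}"

definition is_GP :: "'a set \<Rightarrow> 'a pt set \<Rightarrow> bool" where
  "is_GP I P \<longleftrightarrow> (\<exists>z. submodular_on I z \<and> P = gen_perm I z)"

definition pprod :: "'a set \<Rightarrow> 'a pt set \<Rightarrow> 'a pt set \<Rightarrow> 'a pt set" where
  "pprod S P Q = {(\<lambda>i. if i \<in> S then x i else y i) | x y. x \<in> P \<and> y \<in> Q}"

definition max_face :: "'a pt set \<Rightarrow> 'a set \<Rightarrow> 'a pt set" where
  "max_face P S = {x \<in> P. \<forall>y\<in>P. (\<Sum>i\<in>S. y i) \<le> (\<Sum>i\<in>S. x i)}"

text \<open>Restriction P|_S and contraction P/_S: the two factors of the face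
  max_face P S = P|_S x P/_S.\<close>
definition restr :: "'a pt set \<Rightarrow> 'a set \<Rightarrow> 'a pt set" where
  "restr P S = (\<lambda>x i. if i \<in> S then x i else 0) ` max_face P S"

definition contr :: "'a pt set \<Rightarrow> 'a set \<Rightarrow> 'a pt set" where
  "contr P S = (\<lambda>x i. if i \<in> S then 0 else x i) ` max_face P S"

definition relabel :: "('a \<Rightarrow> 'a) \<Rightarrow> 'a set \<Rightarrow> 'a set \<Rightarrow> 'a pt set \<Rightarrow> 'a pt set" where
  "relabel \<sigma> I J P = (\<lambda>x j. if j \<in> J then x (inv_into I \<sigma> j) else 0) ` P"

text \<open>H is a Hopf submonoid of GP spanned by the family F (F I = the basis polytopes of H[I]).\<close>
definition hopf_subGP :: "('a set \<Rightarrow> 'a pt set set) \<Rightarrow> bool" where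
  "hopf_subGP F \<longleftrightarrow>
     (\<forall>I. finite I \<longrightarrow> (\<forall>P\<in>F I. is_GP I P)) \<and>
     {\<lambda>_. 0} \<in> F {} \<and>
     (\<forall>S T P Q. finite S \<longrightarrow> finite T \<longrightarrow> S \<inter> T = {} \<longrightarrow> P \<in> F S \<longrightarrow> Q \<in> F T \<longrightarrow>
        pprod S P Q \<in> F (S \<union> T)) \<and>
     (\<forall>I S P. finite I \<longrightarrow> S \<subseteq> I \<longrightarrow> P \<in> F I \<longrightarrow>
        restr P S \<in> F S \<and> contr P S \<in> F (I - S)) \<and>
     (\<forall>\<sigma> I J P. finite I \<longrightarrow> bij_betw \<sigma> I J \<longrightarrow> P \<in> F I \<longrightarrow> relabel \<sigma> I J P \<in> F J)"

text \<open>A character of H (given by its values on basis polytopes, extended linearly).\<close>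
definition is_character ::
  "('a set \<Rightarrow> 'a pt set set) \<Rightarrow> ('a set \<Rightarrow> 'a pt set \<Rightarrow> 'k::field) \<Rightarrow> bool" where
  "is_character F \<zeta> \<longleftrightarrow>
     (\<forall>\<sigma> I J P. finite I \<longrightarrow> bij_betw \<sigma> I J \<longrightarrow> P \<in> F I \<longrightarrow>
        \<zeta> J (relabel \<sigma> I J P) = \<zeta> I P) \<and>
     (\<forall>S T P Q. finite S \<longrightarrow> finite T \<longrightarrow> S \<inter> T = {} \<longrightarrow> P \<in> F S \<longrightarrow> Q \<in> F T \<longrightarrow>
        \<zeta> (S \<union> T) (pprod S P Q) = \<zeta> S P * \<zeta> T Q) \<and>
     \<zeta> {} {\<lambda>_. 0} = 1"

definition ind :: "'a pt set \<Rightarrow> 'a pt \<Rightarrow> 'k::field" where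
  "ind P = (\<lambda>x. if x \<in> P then 1 else 0)"

definition ind_span :: "('a set \<Rightarrow> 'a pt set set) \<Rightarrow> 'a set \<Rightarrow> ('a pt \<Rightarrow> 'k::field) set" where
  "ind_span F I = {(\<lambda>x. \<Sum>P\<in>Q. c P * ind P x) | Q c. finite Q \<and> Q \<subseteq> F I}"

text \<open>A linear map f : H[I] -> A (given on the basis F I; sc is the scalar action of k on A)
  is a strong valuation if it factors through a k-linear map on the span of indicators.\<close>
definition strong_valuation ::
  "('a set \<Rightarrow> 'a pt set set) \<Rightarrow> 'a set \<Rightarrow> ('k::field \<Rightarrow> 'v::ab_group_add \<Rightarrow> 'v) \<Rightarrow>
   ('a pt set \<Rightarrow> 'v) \<Rightarrow> bool" where
  "strong_valuation F I sc f \<longleftrightarrow>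
     (\<exists>fh :: ('a pt \<Rightarrow> 'k) \<Rightarrow> 'v.
        (\<forall>u\<in>ind_span F I. \<forall>v\<in>ind_span F I. \<forall>a b.
            fh (\<lambda>x. a * u x + b * v x) = sc a (fh u) + sc b (fh v)) \<and>
        (\<forall>P\<in>F I. f P = fh (ind P)))"

text \<open>Iterated coproduct Delta_{S1,...,Sk}(P), defined by coassociativity.\<close>
fun icoprod :: "'a set list \<Rightarrow> 'a pt set \<Rightarrow> 'a pt set list" where
  "icoprod [] P = []"
| "icoprod (S # Ss) P = restr P S # icoprod Ss (contr P S)"

definition set_decomps :: "'a set \<Rightarrow> nat \<Rightarrow> 'a set list set" where
  "set_decomps I k = {Ss. length Ss = k \<and> \<Union>(set Ss) = I \<and>
      (\<forall>i<k. \<forall>j<k. i \<noteq> j \<longrightarrow> Ss ! i \<inter> Ss ! j = {})}"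

definition ord_set_parts :: "'a set \<Rightarrow> 'a set list set" where
  "ord_set_parts I = {Ss. Ss \<in> set_decomps I (length Ss) \<and> (\<forall>S\<in>set Ss. S \<noteq> {})}"

definition zeta_tensor :: "('a set \<Rightarrow> 'a pt set \<Rightarrow> 'k::field) \<Rightarrow> 'a set list \<Rightarrow> 'a pt set \<Rightarrow> 'k" where
  "zeta_tensor \<zeta> Ss P = prod_list (map2 \<zeta> Ss (icoprod Ss P))"

definition conv_pow :: "('a set \<Rightarrow> 'a pt set \<Rightarrow> 'k::field) \<Rightarrow> 'a set \<Rightarrow> nat \<Rightarrow> 'a pt set \<Rightarrow> 'k" where
  "conv_pow \<zeta> I k P = (\<Sum>Ss\<in>set_decomps I k. zeta_tensor \<zeta> Ss P)"

text \<open>f_zeta(P)(t): the unique polynomial with f(k) = zeta^{*k}(P) for all k >= 1.\<close>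
definition f_zeta :: "('a set \<Rightarrow> 'a pt set \<Rightarrow> 'k::field_char_0) \<Rightarrow> 'a set \<Rightarrow> 'a pt set \<Rightarrow> 'k poly" where
  "f_zeta \<zeta> I P = (THE p. \<forall>k::nat. k \<ge> 1 \<longrightarrow> poly p (of_nat k) = conv_pow \<zeta> I k P)"

text \<open>Phi_zeta(P) in QSym, represented by its coefficients in the monomial basis M_alpha
  (alpha a composition, i.e. a list of positive naturals).\<close>
definition Phi_zeta :: "('a set \<Rightarrow> 'a pt set \<Rightarrow> 'k::field) \<Rightarrow> 'a set \<Rightarrow> 'a pt set \<Rightarrow> (nat list \<Rightarrow> 'k)" where
  "Phi_zeta \<zeta> I P = (\<lambda>\<alpha>. \<Sum>Ss\<in>{Ss \<in> ord_set_parts I. map card Ss = \<alpha>}. zeta_tensor \<zeta> Ss P)"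

text \<open>O_zeta(P), represented by its coefficients in the basis of ordered set partitions.\<close>
definition O_zeta :: "('a set \<Rightarrow> 'a pt set \<Rightarrow> 'k::field) \<Rightarrow> 'a set \<Rightarrow> 'a pt set \<Rightarrow> ('a set list \<Rightarrow> 'k)" where
  "O_zeta \<zeta> I P = (\<lambda>Ss. if Ss \<in> ord_set_parts I then zeta_tensor \<zeta> Ss P else 0)"

end

theory Submission
  imports Defs "HOL-Analysis.Analysis"
begin

(* A linear relation among indicator functions of generalized permutahedra in R^I survives
   passing to the faces maximizing the S-sum. Near a point w, a small probe set meets P exactly
   when w lies in P but off that face; intersecting the relation with the probe and applying the
   Euler characteristic (the valuation that is 1 on every nonempty compact convex set) yields the
   relation for the faces at w. Since that face is the product P|_S x P/_S, every relation among
   the 1_P gives one among the 1_{P|_S} (x) 1_{P/_S}; hence zeta_S (x) zeta_{I-S} o Delta_{S,I-S},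
   and by induction each iterated zeta_{S_1} (x) ... (x) zeta_{S_k} o Delta, respects all relations,
   i.e. is a strong valuation. Phi_zeta and O_zeta are families of sums of these maps, and
   f_zeta(P) is the sum over j of (zeta - counit)^{*j}(P) times the polynomial binom(t, j). *)

section \<open>Euler characteristic of compact convex sets\<close>

text \<open>Points are functions without a vector space structure, so convexity is stated
  coordinatewise.\<close>

definition pointwise_convex :: "'a pt set \<Rightarrow> bool" where
  "pointwise_convex X \<longleftrightarrow>
     (\<forall>x\<in>X. \<forall>y\<in>X. \<forall>s::real. 0 \<le> s \<longrightarrow> s \<le> 1 \<longrightarrow> (\<lambda>i. (1 - s) * x i + s * y i) \<in> X)"

lemma pointwise_convex_Int: "pointwise_convex A \<Longrightarrow> pointwise_convex B \<Longrightarrow> pointwise_convex (A \<inter> B)"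
  unfolding pointwise_convex_def by blast

lemma pointwise_convex_coordinate_eq: "pointwise_convex {u. u i = b}"
  unfolding pointwise_convex_def by (auto simp: algebra_simps)

lemma closed_coordinate_eq: "closed {u :: 'a pt. u i = b}"
  by (rule closed_Collect_eq) (auto intro: continuous_intros)

lemma coordinate_image_interval:
  assumes "compact X" "pointwise_convex X" "X \<noteq> {}"
  shows "\<exists>lo hi. lo \<le> hi \<and> (\<lambda>u. u i) ` X = {lo..hi}"
proof -
  have cpt: "compact ((\<lambda>u. u i) ` X)"
    by (rule compact_continuous_image[OF _ assms(1)])
      (rule continuous_on_subset[OF continuous_on_product_coordinates], simp)
  have ne: "(\<lambda>u. u i) ` X \<noteq> {}" using assms(3) by simp
  obtain a where a: "a \<in> X" "\<forall>v\<in>X. a i \<le> v i"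
    using compact_attains_inf[OF cpt ne] by auto
  obtain b where b: "b \<in> X" "\<forall>v\<in>X. v i \<le> b i"
    using compact_attains_sup[OF cpt ne] by auto
  have "\<beta> \<in> (\<lambda>u. u i) ` X" if \<beta>: "a i \<le> \<beta>" "\<beta> \<le> b i" for \<beta>
  proof (cases "a i = b i")
    case True
    then show ?thesis using \<beta> a by (auto intro!: image_eqI[of _ _ a])
  next
    case False
    define s where "s = (\<beta> - a i) / (b i - a i)"
    have "0 \<le> s" "s \<le> 1" using \<beta> False by (auto simp: s_def field_simps)
    then have "(\<lambda>j. (1 - s) * a j + s * b j) \<in> X"
      using assms(2) a b unfolding pointwise_convex_def by blast
    moreover have "s * (b i - a i) = \<beta> - a i" using False by (simp add: s_def)
    then have "(1 - s) * a i + s * b i = \<beta>" by (simp add: algebra_simps)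
    ultimately show ?thesis by (auto intro!: image_eqI)
  qed
  with a b have "(\<lambda>u. u i) ` X = {a i..b i}" by auto
  then show ?thesis using a b by auto
qed

lemma interval_relation_right_end_sum_eq_0:
  fixes c :: "'b \<Rightarrow> 'k::comm_ring_1" and lo hi :: "'b \<Rightarrow> real"
  assumes fin: "finite K" and le: "\<And>k. k \<in> K \<Longrightarrow> lo k \<le> hi k"
    and rel: "\<And>\<beta>. (\<Sum>k\<in>K. c k * of_bool (\<beta> \<in> {lo k..hi k})) = 0"
  shows "(\<Sum>k\<in>{k\<in>K. hi k = \<beta>}. c k) = 0"
proof -
  \<comment> \<open>Just to the right of \<beta>, exactly the intervals ending at \<beta> are lost.\<close>
  have "\<forall>\<^sub>F \<eta> in at_right 0. \<forall>k\<in>K. \<beta> + \<eta> \<in> {lo k..hi k} \<longleftrightarrow> \<beta> \<in> {lo k..hi k} \<and> hi k \<noteq> \<beta>"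
  proof (rule eventually_ball_finite[OF fin], rule ballI)
    fix k
    show "\<forall>\<^sub>F \<eta> in at_right 0. \<beta> + \<eta> \<in> {lo k..hi k} \<longleftrightarrow> \<beta> \<in> {lo k..hi k} \<and> hi k \<noteq> \<beta>"
      unfolding eventually_at_right_field
      by (rule exI[of _ "if hi k \<le> \<beta> then 1 else if lo k \<le> \<beta> then hi k - \<beta> else lo k - \<beta>"]) auto
  qed
  from eventually_happens'[OF trivial_limit_at_right_real this]
  obtain \<eta> where \<eta>: "\<forall>k\<in>K. \<beta> + \<eta> \<in> {lo k..hi k} \<longleftrightarrow> \<beta> \<in> {lo k..hi k} \<and> hi k \<noteq> \<beta>"
    by blast
  have "0 = (\<Sum>k\<in>K. c k * of_bool (\<beta> \<in> {lo k..hi k})) -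
      (\<Sum>k\<in>K. c k * of_bool (\<beta> + \<eta> \<in> {lo k..hi k}))"
    using rel[of \<beta>] rel[of "\<beta> + \<eta>"] by simp
  also have "\<dots> = (\<Sum>k\<in>K. if hi k = \<beta> then c k else 0)"
    unfolding sum_subtractf[symmetric] using \<eta> le by (intro sum.cong) auto
  also have "\<dots> = (\<Sum>k\<in>{k\<in>K. hi k = \<beta>}. c k)"
    by (simp add: sum.inter_filter[OF fin])
  finally show ?thesis by simp
qed

lemma interval_relation_sum_eq_0:
  fixes c :: "'b \<Rightarrow> 'k::comm_ring_1" and lo hi :: "'b \<Rightarrow> real"
  assumes "finite K" "\<And>k. k \<in> K \<Longrightarrow> lo k \<le> hi k"
    and "\<And>\<beta>. (\<Sum>k\<in>K. c k * of_bool (\<beta> \<in> {lo k..hi k})) = 0"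
  shows "(\<Sum>k\<in>K. c k) = 0"
  using sum.image_gen[OF assms(1), of c hi] interval_relation_right_end_sum_eq_0[OF assms] by simp

theorem euler_char_relation:
  fixes c :: "'b \<Rightarrow> 'k::field"
  assumes "finite J" "finite K"
    and "\<And>k. k \<in> K \<Longrightarrow>
      compact (X k) \<and> pointwise_convex (X k) \<and> X k \<subseteq> {u. \<forall>j. j \<notin> J \<longrightarrow> u j = p j}"
    and "\<And>u. (\<Sum>k\<in>K. c k * ind (X k) u) = 0"
  shows "(\<Sum>k\<in>{k\<in>K. X k \<noteq> {}}. c k) = 0"
  using assms
proof (induction J arbitrary: X p rule: finite_induct)
  case empty
  have "X k \<subseteq> {p}" if "k \<in> K" for k
  proof
    fix u assume "u \<in> X k"
    then have "\<forall>j. u j = p j" using empty.prems(2)[OF that] by auto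
    then show "u \<in> {p}" by auto
  qed
  then have "X k \<noteq> {} \<longleftrightarrow> p \<in> X k" if "k \<in> K" for k
    using that by blast
  then have "{k\<in>K. X k \<noteq> {}} = {k\<in>K. p \<in> X k}" by auto
  moreover have "(\<Sum>k\<in>K. c k * ind (X k) p) = (\<Sum>k\<in>{k\<in>K. p \<in> X k}. c k)"
    by (simp add: ind_def sum.inter_filter[OF \<open>finite K\<close>] if_distrib cong: if_cong)
  ultimately show ?case using empty.prems(3)[of p] by simp
next
  case (insert i J)
  define K' where "K' = {k\<in>K. X k \<noteq> {}}"
  have "\<exists>lo hi. lo \<le> hi \<and> (\<lambda>u. u i) ` X k = {lo..hi}" if "k \<in> K'" for k
    using that insert.prems(2) by (intro coordinate_image_interval) (auto simp: K'_def)
  then obtain lo hi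
    where lohi: "\<And>k. k \<in> K' \<Longrightarrow> lo k \<le> hi k \<and> (\<lambda>u. u i) ` X k = {lo k..hi k}"
    by metis
  \<comment> \<open>Slicing at u i = \<beta> preserves the relation; the slice is nonempty iff
    \<beta> lies in the projection.\<close>
  have slice: "(\<Sum>k\<in>{k\<in>K. X k \<inter> {u. u i = \<beta>} \<noteq> {}}. c k) = 0" for \<beta>
  proof (rule insert.IH[of "\<lambda>k. X k \<inter> {u. u i = \<beta>}" "p(i := \<beta>)"])
    fix k assume "k \<in> K"
    then show "compact (X k \<inter> {u. u i = \<beta>}) \<and> pointwise_convex (X k \<inter> {u. u i = \<beta>}) \<and>
        X k \<inter> {u. u i = \<beta>} \<subseteq> {u. \<forall>j. j \<notin> J \<longrightarrow> u j = (p(i := \<beta>)) j}"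
      using insert.prems(2)
      by (auto intro!: compact_Int_closed closed_coordinate_eq pointwise_convex_Int
          pointwise_convex_coordinate_eq)
  next
    fix u
    have "(\<Sum>k\<in>K. c k * ind (X k \<inter> {u. u i = \<beta>}) u) =
        (if u i = \<beta> then \<Sum>k\<in>K. c k * ind (X k) u else 0)"
      by (simp add: ind_def)
    then show "(\<Sum>k\<in>K. c k * ind (X k \<inter> {u. u i = \<beta>}) u) = 0"
      using insert.prems(3)[of u] by simp
  qed (use insert.prems in auto)
  have "(\<Sum>k\<in>K'. c k) = 0"
  proof (rule interval_relation_sum_eq_0)
    fix \<beta>
    have "(\<Sum>k\<in>K'. c k * of_bool (\<beta> \<in> {lo k..hi k})) =
        (\<Sum>k\<in>K'. if X k \<inter> {u. u i = \<beta>} \<noteq> {} then c k else 0)"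
    proof (rule sum.cong[OF refl])
      fix k assume "k \<in> K'"
      then have "{lo k..hi k} = (\<lambda>u. u i) ` X k" using lohi by simp
      then show "c k * of_bool (\<beta> \<in> {lo k..hi k}) =
          (if X k \<inter> {u. u i = \<beta>} \<noteq> {} then c k else 0)"
        by auto
    qed
    also have "\<dots> = (\<Sum>k\<in>{k\<in>K'. X k \<inter> {u. u i = \<beta>} \<noteq> {}}. c k)"
      by (rule sum.inter_filter[symmetric]) (use insert.prems(1) in \<open>simp add: K'_def\<close>)
    also have "{k\<in>K'. X k \<inter> {u. u i = \<beta>} \<noteq> {}} = {k\<in>K. X k \<inter> {u. u i = \<beta>} \<noteq> {}}"
      by (auto simp: K'_def)
    finally show "(\<Sum>k\<in>K'. c k * of_bool (\<beta> \<in> {lo k..hi k})) = 0" using slice by simp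
  qed (use lohi insert.prems(1) in \<open>auto simp: K'_def\<close>)
  then show ?case by (simp add: K'_def)
qed

section \<open>Faces of generalized permutahedra\<close>

lemma mem_gen_perm:
  "x \<in> gen_perm I z \<longleftrightarrow> (\<forall>i. i \<notin> I \<longrightarrow> x i = 0) \<and> (\<Sum>i\<in>I. x i) = z I \<and>
     (\<forall>A. A \<subseteq> I \<longrightarrow> (\<Sum>i\<in>A. x i) \<le> z A)"
  by (simp add: gen_perm_def)

lemma submodular_on_subset: "submodular_on I z \<Longrightarrow> J \<subseteq> I \<Longrightarrow> submodular_on J z"
  unfolding submodular_on_def by blast

lemma gen_perm_insert:
  assumes "finite I" "submodular_on I z" "e \<in> I" and x: "x \<in> gen_perm (I - {e}) z"
  shows "x(e := z I - z (I - {e})) \<in> gen_perm I z"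
proof -
  define y where "y = x(e := z I - z (I - {e}))"
  have x0: "\<And>i. i \<notin> I - {e} \<Longrightarrow> x i = 0" and xI: "(\<Sum>i\<in>I - {e}. x i) = z (I - {e})"
    and xA: "\<And>A. A \<subseteq> I - {e} \<Longrightarrow> (\<Sum>i\<in>A. x i) \<le> z A"
    using x by (auto simp: mem_gen_perm)
  have sum_y: "(\<Sum>i\<in>A. y i) = z I - z (I - {e}) + (\<Sum>i\<in>A - {e}. x i)"
    if "e \<in> A" "A \<subseteq> I" for A
  proof -
    have "finite A" using that assms(1) finite_subset by auto
    then have "(\<Sum>i\<in>A. y i) = y e + (\<Sum>i\<in>A - {e}. y i)" using that by (simp add: sum.remove)
    then show ?thesis by (simp add: y_def)
  qed
  have "(\<Sum>i\<in>A. y i) \<le> z A" if A: "A \<subseteq> I" for A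
  proof (cases "e \<in> A")
    case True
    have "A \<union> (I - {e}) = I" "A \<inter> (I - {e}) = A - {e}" using A True assms(3) by auto
    then have "z I + z (A - {e}) \<le> z A + z (I - {e})"
      using assms(2) A unfolding submodular_on_def by (metis Diff_subset)
    moreover have "(\<Sum>i\<in>A - {e}. x i) \<le> z (A - {e})" using A by (intro xA) auto
    ultimately show ?thesis using sum_y[OF True A] by simp
  next
    case False
    then have "(\<Sum>i\<in>A. y i) = (\<Sum>i\<in>A. x i)" by (auto simp: y_def intro!: sum.cong)
    then show ?thesis using xA[of A] A False by auto
  qed
  moreover have "(\<Sum>i\<in>I. y i) = z I" using sum_y[OF assms(3) order_refl] xI by simp
  moreover have "y i = 0" if "i \<notin> I" for i using that x0 assms(3) by (auto simp: y_def)
  ultimately show ?thesis by (simp add: mem_gen_perm y_def)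
qed

text \<open>The greedy algorithm: build the point one coordinate at a time, adding the elements
  outside S last.\<close>

lemma gen_perm_tight:
  assumes "finite I" "submodular_on I z" "S \<subseteq> I"
  shows "\<exists>x\<in>gen_perm I z. (\<Sum>i\<in>S. x i) = z S"
  using assms
proof (induction I arbitrary: S rule: finite_psubset_induct)
  case (psubset I)
  show ?case
  proof (cases "I = {}")
    case True
    then show ?thesis
      using psubset.prems by (intro bexI[of _ "\<lambda>_. 0"]) (auto simp: mem_gen_perm submodular_on_def)
  next
    case False
    then obtain e where e: "e \<in> I" "e \<notin> S \<or> S = I" using psubset.prems(2) by blast
    have sub: "I - {e} \<subset> I" using e by auto
    obtain x where x: "x \<in> gen_perm (I - {e}) z" "(\<Sum>i\<in>S - {e}. x i) = z (S - {e})"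
      using psubset.IH[OF sub submodular_on_subset[OF psubset.prems(1)], of "S - {e}"]
        psubset.prems(2) sub by auto
    define y where "y = x(e := z I - z (I - {e}))"
    have y: "y \<in> gen_perm I z"
      unfolding y_def using gen_perm_insert[OF psubset.hyps psubset.prems(1) e(1) x(1)] .
    have "(\<Sum>i\<in>S. y i) = z S"
    proof (cases "e \<in> S")
      case True
      then show ?thesis using e y by (simp add: mem_gen_perm)
    next
      case False
      then have "(\<Sum>i\<in>S. y i) = (\<Sum>i\<in>S - {e}. x i)" by (auto simp: y_def intro!: sum.cong)
      then show ?thesis using x(2) False by simp
    qed
    then show ?thesis using y by blast
  qed
qed

lemma max_face_gen_perm:
  assumes "finite I" "submodular_on I z" "S \<subseteq> I"
  shows "max_face (gen_perm I z) S = {x \<in> gen_perm I z. (\<Sum>i\<in>S. x i) = z S}"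
proof -
  obtain y where "y \<in> gen_perm I z" "(\<Sum>i\<in>S. y i) = z S" using gen_perm_tight[OF assms] by blast
  moreover have "\<And>x. x \<in> gen_perm I z \<Longrightarrow> (\<Sum>i\<in>S. x i) \<le> z S"
    using assms(3) by (auto simp: mem_gen_perm)
  ultimately show ?thesis unfolding max_face_def by (smt (verit) Collect_cong)
qed

definition glue :: "'a set \<Rightarrow> 'a pt \<Rightarrow> 'a pt \<Rightarrow> 'a pt" where
  "glue S x y = (\<lambda>i. if i \<in> S then x i else y i)"

lemma sum_glue: "finite A \<Longrightarrow> (\<Sum>i\<in>A. glue S x y i) = (\<Sum>i\<in>A \<inter> S. x i) + (\<Sum>i\<in>A - S. y i)"
  by (simp add: glue_def sum.If_cases Int_commute Diff_eq)

lemma glue_mem_max_face: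
  assumes fin: "finite I" and sm: "submodular_on I z" and S: "S \<subseteq> I"
    and x: "x \<in> max_face (gen_perm I z) S" and y: "y \<in> max_face (gen_perm I z) S"
  shows "glue S x y \<in> max_face (gen_perm I z) S"
proof -
  note face = max_face_gen_perm[OF fin sm S]
  have xP: "x \<in> gen_perm I z" and xS: "(\<Sum>i\<in>S. x i) = z S"
    and yP: "y \<in> gen_perm I z" and yS: "(\<Sum>i\<in>S. y i) = z S" using x y face by auto
  have "finite S" using fin S finite_subset by auto
  \<comment> \<open>The point y is tight on S, so its part outside S is a difference of values of z.\<close>
  have y_outside: "(\<Sum>i\<in>A - S. y i) = (\<Sum>i\<in>A \<union> S. y i) - z S" if "finite A" for A
  proof -
    have "(\<Sum>i\<in>A \<union> S. y i) = (\<Sum>i\<in>(A - S) \<union> S. y i)" by (simp add: Un_Diff_cancel2)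
    also have "\<dots> = (\<Sum>i\<in>A - S. y i) + (\<Sum>i\<in>S. y i)"
      using that \<open>finite S\<close> by (intro sum.union_disjoint) auto
    finally show ?thesis using yS by simp
  qed
  have "(\<Sum>i\<in>A. glue S x y i) \<le> z A" if A: "A \<subseteq> I" for A
  proof -
    have "finite A" using A fin finite_subset by auto
    have "(\<Sum>i\<in>A \<inter> S. x i) \<le> z (A \<inter> S)" using xP A by (simp add: mem_gen_perm le_infI1)
    moreover have "(\<Sum>i\<in>A \<union> S. y i) \<le> z (A \<union> S)" using yP A S by (auto simp: mem_gen_perm)
    moreover have "z (A \<union> S) + z (A \<inter> S) \<le> z A + z S" using sm A S by (simp add: submodular_on_def)
    ultimately show ?thesis using sum_glue[OF \<open>finite A\<close>] y_outside[OF \<open>finite A\<close>] by simp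
  qed
  moreover have "(\<Sum>i\<in>I. glue S x y i) = z I"
    using sum_glue[OF fin] y_outside[OF fin] xS yP S
    by (simp add: Int_absorb1 Un_absorb2 mem_gen_perm)
  moreover have "glue S x y i = 0" if "i \<notin> I" for i
    using that xP yP S by (auto simp: glue_def mem_gen_perm)
  moreover have "(\<Sum>i\<in>S. glue S x y i) = z S" using sum_glue[OF \<open>finite S\<close>] xS by simp
  ultimately show ?thesis using face by (simp add: mem_gen_perm)
qed

lemma restr_contr_iff_glue_mem_max_face:
  assumes "finite I" "submodular_on I z" "S \<subseteq> I"
  shows "a \<in> restr (gen_perm I z) S \<and> b \<in> contr (gen_perm I z) S \<longleftrightarrow>
    (\<forall>i. i \<notin> S \<longrightarrow> a i = 0) \<and> (\<forall>i\<in>S. b i = 0) \<and> glue S a b \<in> max_face (gen_perm I z) S"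
proof
  assume "a \<in> restr (gen_perm I z) S \<and> b \<in> contr (gen_perm I z) S"
  then obtain x y where x: "x \<in> max_face (gen_perm I z) S" "a = (\<lambda>i. if i \<in> S then x i else 0)"
    and y: "y \<in> max_face (gen_perm I z) S" "b = (\<lambda>i. if i \<in> S then 0 else y i)"
    by (auto simp: restr_def contr_def)
  have "glue S a b = glue S x y" by (auto simp: x y glue_def)
  then show "(\<forall>i. i \<notin> S \<longrightarrow> a i = 0) \<and> (\<forall>i\<in>S. b i = 0) \<and>
      glue S a b \<in> max_face (gen_perm I z) S"
    using glue_mem_max_face[OF assms x(1) y(1)] x y by auto
next
  assume H: "(\<forall>i. i \<notin> S \<longrightarrow> a i = 0) \<and> (\<forall>i\<in>S. b i = 0) \<and>
    glue S a b \<in> max_face (gen_perm I z) S"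
  then have "a = (\<lambda>i. if i \<in> S then glue S a b i else 0)"
    and "b = (\<lambda>i. if i \<in> S then 0 else glue S a b i)"
    by (auto simp: glue_def)
  then show "a \<in> restr (gen_perm I z) S \<and> b \<in> contr (gen_perm I z) S"
    using H unfolding restr_def contr_def by blast
qed

lemma closed_gen_perm: "closed (gen_perm I z)"
proof -
  have "gen_perm I z = (\<Inter>i\<in>-I. {x. x i = 0}) \<inter> {x. (\<Sum>i\<in>I. x i) = z I} \<inter>
      (\<Inter>A\<in>Pow I. {x. (\<Sum>i\<in>A. x i) \<le> z A})"
    by (auto simp: mem_gen_perm)
  moreover have "continuous_on UNIV (\<lambda>x :: 'a pt. \<Sum>i\<in>A. x i)" for A
    by (intro continuous_intros) simp
  ultimately show ?thesis
    by (auto intro!: closed_Int closed_INT closed_coordinate_eq closed_Collect_eq closed_Collect_le)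
qed

lemma pointwise_convex_gen_perm: "pointwise_convex (gen_perm I z)"
  unfolding pointwise_convex_def
proof (intro ballI allI impI)
  fix x y and s :: real
  assume x: "x \<in> gen_perm I z" and y: "y \<in> gen_perm I z" and s: "0 \<le> s" "s \<le> 1"
  have lin: "(\<Sum>i\<in>A. (1 - s) * x i + s * y i) = (1 - s) * (\<Sum>i\<in>A. x i) + s * (\<Sum>i\<in>A. y i)" for A
    by (simp add: sum.distrib sum_distrib_left)
  have "(1 - s) * (\<Sum>i\<in>A. x i) + s * (\<Sum>i\<in>A. y i) \<le> (1 - s) * z A + s * z A" if "A \<subseteq> I" for A
    using x y s that by (intro add_mono mult_left_mono) (auto simp: mem_gen_perm)
  moreover have "(1 - s) * (\<Sum>i\<in>I. x i) + s * (\<Sum>i\<in>I. y i) = z I"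
    using x y by (simp add: mem_gen_perm algebra_simps)
  ultimately show "(\<lambda>i. (1 - s) * x i + s * y i) \<in> gen_perm I z"
    using x y unfolding mem_gen_perm lin by (simp add: algebra_simps)
qed

section \<open>Indicator relations pass to faces\<close>

text \<open>For small t it meets a generalized permutahedron P
  exactly when w \<in> P but w is not on the face of P maximizing the S-sum.\<close>

definition face_probe :: "'a set \<Rightarrow> 'a set \<Rightarrow> 'a pt \<Rightarrow> real \<Rightarrow> 'a pt set" where
  "face_probe I S w t = {u. (\<forall>i\<in>I. \<bar>u i - w i\<bar> \<le> t) \<and> (\<forall>i. i \<notin> I \<longrightarrow> u i = w i) \<and>
     (\<Sum>i\<in>S. w i) + t\<^sup>2 \<le> (\<Sum>i\<in>S. u i)}"

lemma compact_face_probe: "compact (face_probe I S w t)"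
proof -
  define B where "B i = (if i \<in> I then {w i - t..w i + t} else {w i})" for i
  have "compact (PiE UNIV B)"
    using compactin_PiE[of "\<lambda>i. euclidean" UNIV B] by (simp add: euclidean_product_topology B_def)
  moreover have "closed {u :: 'a pt. (\<Sum>i\<in>S. w i) + t\<^sup>2 \<le> (\<Sum>i\<in>S. u i)}"
    by (intro closed_Collect_le continuous_intros) simp_all
  moreover have "face_probe I S w t = PiE UNIV B \<inter> {u. (\<Sum>i\<in>S. w i) + t\<^sup>2 \<le> (\<Sum>i\<in>S. u i)}"
    by (auto simp: face_probe_def PiE_iff B_def abs_diff_le_iff split: if_splits)
  ultimately show ?thesis by (simp add: compact_Int_closed)
qed

lemma pointwise_convex_face_probe: "pointwise_convex (face_probe I S w t)"
  unfolding pointwise_convex_def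
proof (intro ballI allI impI)
  fix x y and s :: real
  assume x: "x \<in> face_probe I S w t" and y: "y \<in> face_probe I S w t" and s: "0 \<le> s" "s \<le> 1"
  have "\<bar>(1 - s) * x i + s * y i - w i\<bar> \<le> t" if "i \<in> I" for i
  proof -
    have "\<bar>(1 - s) * x i + s * y i - w i\<bar> = \<bar>(1 - s) * (x i - w i) + s * (y i - w i)\<bar>"
      by (simp add: algebra_simps)
    also have "\<dots> \<le> (1 - s) * \<bar>x i - w i\<bar> + s * \<bar>y i - w i\<bar>"
      using s by (metis abs_mult abs_of_nonneg abs_triangle_ineq diff_ge_0_iff_ge)
    also have "\<dots> \<le> (1 - s) * t + s * t"
      using x y s that by (intro add_mono mult_left_mono) (auto simp: face_probe_def)
    finally show ?thesis by (simp add: algebra_simps)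
  qed
  moreover have "(\<Sum>i\<in>S. w i) + t\<^sup>2 \<le> (\<Sum>i\<in>S. (1 - s) * x i + s * y i)"
  proof -
    have "(1 - s) * ((\<Sum>i\<in>S. w i) + t\<^sup>2) + s * ((\<Sum>i\<in>S. w i) + t\<^sup>2) \<le>
        (1 - s) * (\<Sum>i\<in>S. x i) + s * (\<Sum>i\<in>S. y i)"
      using x y s by (intro add_mono mult_left_mono) (auto simp: face_probe_def)
    moreover have "(\<Sum>i\<in>S. (1 - s) * x i + s * y i) = (1 - s) * (\<Sum>i\<in>S. x i) + s * (\<Sum>i\<in>S. y i)"
      by (simp add: sum.distrib sum_distrib_left)
    ultimately show ?thesis by (simp add: algebra_simps)
  qed
  ultimately show "(\<lambda>i. (1 - s) * x i + s * y i) \<in> face_probe I S w t"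
    using x y by (simp add: face_probe_def algebra_simps)
qed

lemma face_probe_sum_close:
  assumes "u \<in> face_probe I S w t" "A \<subseteq> I" "finite I" "0 \<le> t"
  shows "\<bar>(\<Sum>i\<in>A. u i) - (\<Sum>i\<in>A. w i)\<bar> \<le> real (card I) * t"
proof -
  have "\<bar>(\<Sum>i\<in>A. u i) - (\<Sum>i\<in>A. w i)\<bar> \<le> (\<Sum>i\<in>A. \<bar>u i - w i\<bar>)"
    by (simp add: sum_subtractf[symmetric] sum_abs)
  also have "\<dots> \<le> real (card A) * t"
    using assms by (intro sum_bounded_above) (auto simp: face_probe_def)
  also have "\<dots> \<le> real (card I) * t"
    using assms by (intro mult_right_mono) (auto simp: card_mono face_probe_def)
  finally show ?thesis .
qed

lemma eventually_face_probe_disjoint: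
  assumes "finite I" "w \<notin> gen_perm I z"
  shows "\<forall>\<^sub>F t in at_right 0. gen_perm I z \<inter> face_probe I S w t = {}"
proof (cases "\<exists>j. j \<notin> I \<and> w j \<noteq> 0")
  case True
  then have "gen_perm I z \<inter> face_probe I S w t = {}" for t
    by (auto simp: mem_gen_perm face_probe_def)
  then show ?thesis by simp
next
  case False
  \<comment> \<open>Some linear constraint of gen_perm I z is violated by w with a margin d.\<close>
  have "\<exists>A\<subseteq>I. \<exists>d>0. \<forall>u\<in>gen_perm I z. d \<le> \<bar>(\<Sum>i\<in>A. u i) - (\<Sum>i\<in>A. w i)\<bar>"
  proof (cases "(\<Sum>i\<in>I. w i) = z I")
    case True
    then obtain A where A: "A \<subseteq> I" "z A < (\<Sum>i\<in>A. w i)"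
      using False assms(2) by (auto simp: mem_gen_perm not_le)
    have "(\<Sum>i\<in>A. w i) - z A \<le> \<bar>(\<Sum>i\<in>A. u i) - (\<Sum>i\<in>A. w i)\<bar>" if "u \<in> gen_perm I z" for u
    proof -
      have "(\<Sum>i\<in>A. u i) \<le> z A" using that A(1) by (simp add: mem_gen_perm)
      then show ?thesis by linarith
    qed
    then show ?thesis using A by (intro exI[of _ A] conjI exI[of _ "(\<Sum>i\<in>A. w i) - z A"]) auto
  next
    case False
    then show ?thesis
      by (intro exI[of _ I] conjI exI[of _ "\<bar>(\<Sum>i\<in>I. w i) - z I\<bar>"]) (auto simp: mem_gen_perm)
  qed
  then obtain A d where A: "A \<subseteq> I" "d > 0" "\<forall>u\<in>gen_perm I z. d \<le> \<bar>(\<Sum>i\<in>A. u i) - (\<Sum>i\<in>A. w i)\<bar>"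
    by blast
  have "gen_perm I z \<inter> face_probe I S w t = {}" if "0 < t" "t < d / (real (card I) + 1)" for t
  proof -
    have "real (card I) * t < d"
      using that A(2) by (simp add: field_simps)
    then show ?thesis using A face_probe_sum_close[OF _ A(1) assms(1)] that(1) by fastforce
  qed
  moreover have "d / (real (card I) + 1) > 0" using A(2) by simp
  ultimately show ?thesis unfolding eventually_at_right_field by blast
qed

lemma face_probe_disjoint_max_face:
  assumes "w \<in> max_face P S" "t > 0"
  shows "P \<inter> face_probe I S w t = {}"
proof -
  have "(\<Sum>i\<in>S. u i) \<le> (\<Sum>i\<in>S. w i)" if "u \<in> P" for u
    using assms(1) that by (auto simp: max_face_def)
  moreover have "(\<Sum>i\<in>S. w i) + t\<^sup>2 \<le> (\<Sum>i\<in>S. u i)" if "u \<in> face_probe I S w t" for u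
    using that by (simp add: face_probe_def)
  ultimately show ?thesis using assms(2) by (smt (verit) disjoint_iff zero_less_power)
qed

lemma eventually_face_probe_meets:
  assumes "finite I" "w \<in> gen_perm I z" "w \<notin> max_face (gen_perm I z) S"
  shows "\<forall>\<^sub>F t in at_right 0. gen_perm I z \<inter> face_probe I S w t \<noteq> {}"
proof -
  obtain p where p: "p \<in> gen_perm I z" "(\<Sum>i\<in>S. w i) < (\<Sum>i\<in>S. p i)"
    using assms(2,3) by (auto simp: max_face_def not_le)
  define \<delta> where "\<delta> = (\<Sum>i\<in>S. p i) - (\<Sum>i\<in>S. w i)"
  define D where "D = (\<Sum>i\<in>I. \<bar>p i - w i\<bar>) + 1"
  have \<delta>: "\<delta> > 0" using p by (simp add: \<delta>_def)
  have D: "D \<ge> 1" by (simp add: D_def sum_nonneg)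
  \<comment> \<open>Moving from w towards p by t / D stays in the box and raises the S-sum by
    t \<delta> / D, which is at least t squared.\<close>
  have "gen_perm I z \<inter> face_probe I S w t \<noteq> {}" if t: "0 < t" "t < min D (\<delta> / D)" for t
  proof -
    define s where "s = t / D"
    have s: "0 \<le> s" "s \<le> 1" using t D by (auto simp: s_def)
    define u where "u = (\<lambda>i. (1 - s) * w i + s * p i)"
    have "u \<in> gen_perm I z"
      using pointwise_convex_gen_perm[of I z] assms(2) p(1) s
      unfolding pointwise_convex_def u_def by blast
    moreover have "\<bar>u i - w i\<bar> \<le> t" if "i \<in> I" for i
    proof -
      have "u i - w i = s * (p i - w i)" by (simp add: u_def algebra_simps)
      then have "\<bar>u i - w i\<bar> = s * \<bar>p i - w i\<bar>" using s by (simp add: abs_mult)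
      also have "\<dots> \<le> s * D"
      proof -
        have "\<bar>p i - w i\<bar> \<le> (\<Sum>i\<in>I. \<bar>p i - w i\<bar>)"
          using that assms(1) by (intro member_le_sum) auto
        then show ?thesis using s by (intro mult_left_mono) (auto simp: D_def)
      qed
      finally show ?thesis using D by (simp add: s_def)
    qed
    moreover have "u i = w i" if "i \<notin> I" for i
      using that assms(2) p(1) by (simp add: u_def mem_gen_perm)
    moreover have "(\<Sum>i\<in>S. w i) + t\<^sup>2 \<le> (\<Sum>i\<in>S. u i)"
    proof -
      have "t * t \<le> t * (\<delta> / D)" using t by (intro mult_left_mono) auto
      then have "t\<^sup>2 \<le> s * \<delta>" by (simp add: s_def power2_eq_square)
      moreover have "(\<Sum>i\<in>S. u i) = (\<Sum>i\<in>S. w i) + s * \<delta>"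
        by (simp add: u_def \<delta>_def sum.distrib sum_distrib_left algebra_simps sum_subtractf)
      ultimately show ?thesis by simp
    qed
    ultimately show ?thesis by (auto simp: face_probe_def)
  qed
  moreover have "min D (\<delta> / D) > 0" using \<delta> D by simp
  ultimately show ?thesis unfolding eventually_at_right_field by blast
qed

lemma eventually_face_probe_meets_iff:
  assumes "finite I"
  shows "\<forall>\<^sub>F t in at_right 0. gen_perm I z \<inter> face_probe I S w t \<noteq> {} \<longleftrightarrow>
    w \<in> gen_perm I z \<and> w \<notin> max_face (gen_perm I z) S"
proof (cases "w \<in> gen_perm I z \<and> w \<notin> max_face (gen_perm I z) S")
  case True
  then show ?thesis using eventually_face_probe_meets[OF assms] by simp
next
  case False
  then consider "w \<notin> gen_perm I z" | "w \<in> max_face (gen_perm I z) S" by blast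
  then show ?thesis
  proof cases
    case 1
    then show ?thesis using eventually_face_probe_disjoint[OF assms] by (simp add: False)
  next
    case 2
    then show ?thesis using face_probe_disjoint_max_face eventually_at_right_less
      by (force simp: False elim: eventually_mono)
  qed
qed

theorem indicator_relation_max_face:
  fixes c :: "'a pt set \<Rightarrow> 'k::field"
  assumes fin: "finite I" "finite Q" and GP: "\<forall>P\<in>Q. is_GP I P"
    and rel: "\<And>x. (\<Sum>P\<in>Q. c P * ind P x) = 0"
  shows "(\<Sum>P\<in>Q. c P * ind (max_face P S) w) = 0"
proof -
  have "\<forall>\<^sub>F t in at_right 0. \<forall>P\<in>Q.
      P \<inter> face_probe I S w t \<noteq> {} \<longleftrightarrow> w \<in> P \<and> w \<notin> max_face P S"
    using GP by (intro eventually_ball_finite[OF fin(2)])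
      (auto simp: is_GP_def eventually_face_probe_meets_iff[OF fin(1)])
  from eventually_happens'[OF trivial_limit_at_right_real this]
  obtain t where t: "\<forall>P\<in>Q. P \<inter> face_probe I S w t \<noteq> {} \<longleftrightarrow> w \<in> P \<and> w \<notin> max_face P S"
    by blast
  have "(\<Sum>P\<in>{P\<in>Q. P \<inter> face_probe I S w t \<noteq> {}}. c P) = 0"
  proof (rule euler_char_relation[of I Q _ w])
    fix P assume "P \<in> Q"
    then obtain z where P: "P = gen_perm I z" using GP by (auto simp: is_GP_def)
    show "compact (P \<inter> face_probe I S w t) \<and> pointwise_convex (P \<inter> face_probe I S w t) \<and>
        P \<inter> face_probe I S w t \<subseteq> {u. \<forall>j. j \<notin> I \<longrightarrow> u j = w j}"
      unfolding P
      by (intro conjI closed_Int_compact closed_gen_perm compact_face_probe pointwise_convex_Int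
          pointwise_convex_gen_perm pointwise_convex_face_probe) (auto simp: face_probe_def)
  next
    fix u
    have "(\<Sum>P\<in>Q. c P * ind (P \<inter> face_probe I S w t) u) =
        (if u \<in> face_probe I S w t then \<Sum>P\<in>Q. c P * ind P u else 0)"
      by (simp add: ind_def)
    then show "(\<Sum>P\<in>Q. c P * ind (P \<inter> face_probe I S w t) u) = 0" using rel by simp
  qed (use fin in auto)
  moreover have "(\<Sum>P\<in>Q. c P * ind (max_face P S) w) =
      (\<Sum>P\<in>Q. c P * ind P w) - (\<Sum>P\<in>{P\<in>Q. P \<inter> face_probe I S w t \<noteq> {}}. c P)"
  proof -
    have "c P * ind (max_face P S) w =
        c P * ind P w - (if P \<inter> face_probe I S w t \<noteq> {} then c P else 0)" if "P \<in> Q" for P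
      using t that max_face_def[of P S] by (auto simp: ind_def)
    then show ?thesis by (simp add: sum_subtractf sum.inter_filter[OF fin(2)] cong: sum.cong)
  qed
  ultimately show ?thesis using rel by simp
qed

section \<open>Maps respecting indicator relations\<close>

definition respects_ind_relations ::
  "('a set \<Rightarrow> 'a pt set set) \<Rightarrow> 'a set \<Rightarrow> ('a pt set \<Rightarrow> 'k::field) \<Rightarrow> bool" where
  "respects_ind_relations F J g \<longleftrightarrow>
     (\<forall>Q c. finite Q \<longrightarrow> Q \<subseteq> F J \<longrightarrow> (\<forall>x. (\<Sum>P\<in>Q. c P * ind P x) = 0) \<longrightarrow>
        (\<Sum>P\<in>Q. c P * g P) = 0)"

lemma respects_ind_relationsD:
  fixes c :: "'b \<Rightarrow> 'k::field"
  assumes "respects_ind_relations F J g" "finite K" "\<And>k. k \<in> K \<Longrightarrow> P k \<in> F J"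
    and "\<And>x. (\<Sum>k\<in>K. c k * ind (P k) x) = 0"
  shows "(\<Sum>k\<in>K. c k * g (P k)) = 0"
proof -
  \<comment> \<open>Collect the coefficients of equal polytopes.\<close>
  have group: "(\<Sum>k\<in>K. c k * h (P k)) = (\<Sum>R\<in>P ` K. (\<Sum>k\<in>{k\<in>K. P k = R}. c k) * h R)"
    for h :: "'a pt set \<Rightarrow> 'k"
  proof -
    have "(\<Sum>k\<in>K. c k * h (P k)) = (\<Sum>R\<in>P ` K. \<Sum>k\<in>{k\<in>K. P k = R}. c k * h (P k))"
      by (rule sum.image_gen[OF assms(2)])
    also have "\<dots> = (\<Sum>R\<in>P ` K. (\<Sum>k\<in>{k\<in>K. P k = R}. c k) * h R)"
      by (simp add: sum_distrib_right)
    finally show ?thesis .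
  qed
  define d where "d R = (\<Sum>k\<in>{k\<in>K. P k = R}. c k)" for R
  have "(\<Sum>R\<in>P ` K. d R * ind R x) = 0" for x
    using assms(4)[of x] group[of "\<lambda>R. ind R x"] by (simp add: d_def)
  with assms(1)[unfolded respects_ind_relations_def, rule_format, of "P ` K" d]
  have "(\<Sum>R\<in>P ` K. d R * g R) = 0"
    using finite_imageI[OF assms(2), of P] image_subsetI[of K P "F J", OF assms(3)] by simp
  then show ?thesis using group[of g] by (simp add: d_def)
qed

lemma respects_ind_relations_sum:
  fixes g :: "'b \<Rightarrow> 'a pt set \<Rightarrow> 'k::field"
  assumes "finite T" "\<And>s. s \<in> T \<Longrightarrow> respects_ind_relations F J (g s)"
  shows "respects_ind_relations F J (\<lambda>P. \<Sum>s\<in>T. g s P)"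
  unfolding respects_ind_relations_def
proof (intro allI impI)
  fix Q and c :: "'a pt set \<Rightarrow> 'k"
  assume Q: "finite Q" "Q \<subseteq> F J" "\<forall>x. (\<Sum>P\<in>Q. c P * ind P x) = 0"
  have "(\<Sum>P\<in>Q. c P * (\<Sum>s\<in>T. g s P)) = (\<Sum>s\<in>T. \<Sum>P\<in>Q. c P * g s P)"
    by (simp add: sum_distrib_left sum.swap[of _ Q])
  also have "\<dots> = 0"
    using assms(2) Q unfolding respects_ind_relations_def by (intro sum.neutral) blast
  finally show "(\<Sum>P\<in>Q. c P * (\<Sum>s\<in>T. g s P)) = 0" .
qed

lemma ind_span_ind: "P \<in> F J \<Longrightarrow> ind P \<in> ind_span F J"
  unfolding ind_span_def by (auto intro!: exI[of _ "{P}"] exI[of _ "\<lambda>_. 1"])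

lemma strong_valuation_imp_respects_ind_relations:
  fixes g :: "'a pt set \<Rightarrow> 'k::field"
  assumes "strong_valuation F J (*) g"
  shows "respects_ind_relations F J g"
  unfolding respects_ind_relations_def
proof (intro allI impI)
  fix Q and c :: "'a pt set \<Rightarrow> 'k"
  assume Q: "finite Q" "Q \<subseteq> F J" and rel: "\<forall>x. (\<Sum>P\<in>Q. c P * ind P x) = 0"
  obtain gh where lin: "\<forall>u\<in>ind_span F J. \<forall>v\<in>ind_span F J. \<forall>a b.
      gh (\<lambda>x. a * u x + b * v x) = a * gh u + b * gh v"
    and g: "\<forall>P\<in>F J. g P = gh (ind P)"
    using assms unfolding strong_valuation_def by blast
  have span: "(\<lambda>x. \<Sum>P\<in>Q'. c P * ind P x) \<in> ind_span F J" if "finite Q'" "Q' \<subseteq> F J" for Q'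
    unfolding ind_span_def using that by blast
  have zero: "(\<lambda>x. 0 :: 'k) \<in> ind_span F J" using span[of "{}"] by simp
  have gh0: "gh (\<lambda>x. 0) = 0" using lin[rule_format, OF zero zero, of 0 0] by simp
  have "gh (\<lambda>x. \<Sum>P\<in>Q'. c P * ind P x) = (\<Sum>P\<in>Q'. c P * g P)" if "finite Q'" "Q' \<subseteq> Q" for Q'
    using that
  proof (induction Q' rule: finite_induct)
    case (insert P Q')
    then have "P \<in> F J" "Q' \<subseteq> F J" using Q(2) by auto
    then have "gh (\<lambda>x. c P * ind P x + 1 * (\<Sum>R\<in>Q'. c R * ind R x)) =
        c P * gh (ind P) + 1 * gh (\<lambda>x. \<Sum>R\<in>Q'. c R * ind R x)"
      using lin[rule_format, OF ind_span_ind span[OF insert.hyps(1)], of P "c P" 1] by simp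
    then show ?case using insert g \<open>P \<in> F J\<close> by simp
  qed (simp add: gh0)
  from this[OF Q(1) order_refl] show "(\<Sum>P\<in>Q. c P * g P) = 0" using rel gh0 by simp
qed

text \<open>Conversely, a map respecting all relations among indicators extends to their span; the
  extension evaluates any representation of the function as a combination of indicators.\<close>

definition ind_extension ::
  "('a set \<Rightarrow> 'a pt set set) \<Rightarrow> 'a set \<Rightarrow> ('a pt set \<Rightarrow> 'k::field) \<Rightarrow> ('a pt \<Rightarrow> 'k) \<Rightarrow> 'k" where
  "ind_extension F J g u = (THE v. \<exists>Q c. finite Q \<and> Q \<subseteq> F J \<and>
     u = (\<lambda>x. \<Sum>P\<in>Q. c P * ind P x) \<and> v = (\<Sum>P\<in>Q. c P * g P))"

lemma sum_coeffs_on_superset: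
  fixes c :: "'b \<Rightarrow> 'k::semiring_0"
  assumes "finite Q" "Q1 \<subseteq> Q"
  shows "(\<Sum>P\<in>Q. (if P \<in> Q1 then c P else 0) * h P) = (\<Sum>P\<in>Q1. c P * h P)"
proof -
  have "(\<Sum>P\<in>Q. (if P \<in> Q1 then c P else 0) * h P) = (\<Sum>P\<in>Q. if P \<in> Q1 then c P * h P else 0)"
    by (intro sum.cong) auto
  also have "\<dots> = (\<Sum>P\<in>{P\<in>Q. P \<in> Q1}. c P * h P)"
    by (rule sum.inter_filter[OF assms(1), symmetric])
  also have "{P\<in>Q. P \<in> Q1} = Q1" using assms(2) by auto
  finally show ?thesis .
qed

lemma sum_coeffs_union:
  fixes c1 c2 :: "'b \<Rightarrow> 'k::comm_ring_1" and a b :: 'k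
  assumes "finite Q1" "finite Q2"
  defines "c \<equiv> \<lambda>P. a * (if P \<in> Q1 then c1 P else 0) + b * (if P \<in> Q2 then c2 P else 0)"
  shows "(\<Sum>P\<in>Q1 \<union> Q2. c P * h P) = a * (\<Sum>P\<in>Q1. c1 P * h P) + b * (\<Sum>P\<in>Q2. c2 P * h P)"
proof -
  have "(\<Sum>P\<in>Q1 \<union> Q2. c P * h P) = a * (\<Sum>P\<in>Q1 \<union> Q2. (if P \<in> Q1 then c1 P else 0) * h P) +
      b * (\<Sum>P\<in>Q1 \<union> Q2. (if P \<in> Q2 then c2 P else 0) * h P)"
    by (simp add: c_def distrib_right mult.assoc sum.distrib sum_distrib_left)
  then show ?thesis using assms(1,2) by (simp add: sum_coeffs_on_superset)
qed

lemma ind_extension_eq: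
  assumes g: "respects_ind_relations F J g" and Q: "finite Q" "Q \<subseteq> F J"
    and u: "u = (\<lambda>x. \<Sum>P\<in>Q. c P * ind P x)"
  shows "ind_extension F J g u = (\<Sum>P\<in>Q. c P * g P)"
  unfolding ind_extension_def
proof (rule the_equality)
  fix v
  assume "\<exists>Q' c'. finite Q' \<and> Q' \<subseteq> F J \<and> u = (\<lambda>x. \<Sum>P\<in>Q'. c' P * ind P x) \<and>
    v = (\<Sum>P\<in>Q'. c' P * g P)"
  then obtain Q' c' where Q': "finite Q'" "Q' \<subseteq> F J" "u = (\<lambda>x. \<Sum>P\<in>Q'. c' P * ind P x)"
    and v: "v = (\<Sum>P\<in>Q'. c' P * g P)" by blast
  \<comment> \<open>The difference of the two representations is a relation among indicators.\<close>
  define d where "d P = 1 * (if P \<in> Q' then c' P else 0) + (- 1) * (if P \<in> Q then c P else 0)" for P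
  have d: "(\<Sum>P\<in>Q' \<union> Q. d P * h P) = (\<Sum>P\<in>Q'. c' P * h P) - (\<Sum>P\<in>Q. c P * h P)" for h
    unfolding d_def using sum_coeffs_union[OF Q'(1) Q(1), of 1 c' "-1" c h] by simp
  have "(\<Sum>P\<in>Q' \<union> Q. d P * ind P x) = 0" for x
    using d[of "\<lambda>P. ind P x"] fun_cong[OF trans[OF Q'(3)[symmetric] u], of x] by simp
  with g[unfolded respects_ind_relations_def, rule_format, of "Q' \<union> Q" d]
  have "(\<Sum>P\<in>Q' \<union> Q. d P * g P) = 0" using Q Q' by simp
  then show "v = (\<Sum>P\<in>Q. c P * g P)" using d[of g] v by simp
qed (use Q u in blast)

lemma ind_extension_linear:
  assumes g: "respects_ind_relations F J g" and "u \<in> ind_span F J" "v \<in> ind_span F J"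
  shows "ind_extension F J g (\<lambda>x. a * u x + b * v x) =
    a * ind_extension F J g u + b * ind_extension F J g v"
proof -
  obtain Q1 c1 where Q1: "finite Q1" "Q1 \<subseteq> F J" "u = (\<lambda>x. \<Sum>P\<in>Q1. c1 P * ind P x)"
    using assms(2) unfolding ind_span_def by blast
  obtain Q2 c2 where Q2: "finite Q2" "Q2 \<subseteq> F J" "v = (\<lambda>x. \<Sum>P\<in>Q2. c2 P * ind P x)"
    using assms(3) unfolding ind_span_def by blast
  define c where "c P = a * (if P \<in> Q1 then c1 P else 0) + b * (if P \<in> Q2 then c2 P else 0)" for P
  note union = sum_coeffs_union[OF Q1(1) Q2(1), of a c1 b c2, folded c_def]
  have "(\<lambda>x. a * u x + b * v x) = (\<lambda>x. \<Sum>P\<in>Q1 \<union> Q2. c P * ind P x)"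
    using Q1(3) Q2(3) union by simp
  then have "ind_extension F J g (\<lambda>x. a * u x + b * v x) = (\<Sum>P\<in>Q1 \<union> Q2. c P * g P)"
    using Q1 Q2 by (intro ind_extension_eq[OF g]) auto
  then show ?thesis using union ind_extension_eq[OF g Q1] ind_extension_eq[OF g Q2] by simp
qed

lemma ind_extension_ind:
  assumes "respects_ind_relations F J g" "P \<in> F J"
  shows "ind_extension F J g (ind P) = g P"
  using ind_extension_eq[OF assms(1), of "{P}" "ind P" "\<lambda>_. 1"] assms(2) by simp

lemma strong_valuation_pointwise:
  assumes "\<And>\<alpha>. respects_ind_relations F J (g \<alpha>)"
  shows "strong_valuation F J (\<lambda>a h. \<lambda>\<alpha>. a * h \<alpha>) (\<lambda>P \<alpha>. g \<alpha> P)"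
  unfolding strong_valuation_def
  using ind_extension_linear[OF assms] ind_extension_ind[OF assms]
  by (intro exI[of _ "\<lambda>u \<alpha>. ind_extension F J (g \<alpha>) u"]) (auto simp: fun_eq_iff)

lemma smult_sum_right: "smult a (\<Sum>j\<in>S. p j) = (\<Sum>j\<in>S. smult a (p j))"
  by (induction S rule: infinite_finite_induct) (simp_all add: smult_add_right)

lemma strong_valuation_poly_combination:
  fixes cc :: "nat \<Rightarrow> 'a pt set \<Rightarrow> 'k::field"
  assumes "\<And>j. respects_ind_relations F J (cc j)"
    and "\<And>P. P \<in> F J \<Longrightarrow> f P = (\<Sum>j\<le>N. smult (cc j P) (B j))"
  shows "strong_valuation F J smult f"
  unfolding strong_valuation_def
  using ind_extension_linear[OF assms(1)] ind_extension_ind[OF assms(1)] assms(2)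
  by (intro exI[of _ "\<lambda>u. \<Sum>j\<le>N. smult (ind_extension F J (cc j) u) (B j)"])
    (simp add: smult_sum_right smult_smult smult_add_left sum.distrib)

section \<open>Iterated coproducts of a character\<close>

lemma hopf_subGPD:
  assumes "hopf_subGP F" "finite I" "P \<in> F I"
  shows hopf_subGP_is_GP: "is_GP I P"
    and hopf_subGP_restr: "S \<subseteq> I \<Longrightarrow> restr P S \<in> F S"
    and hopf_subGP_contr: "S \<subseteq> I \<Longrightarrow> contr P S \<in> F (I - S)"
proof -
  have "\<forall>I. finite I \<longrightarrow> (\<forall>P\<in>F I. is_GP I P)"
    using assms(1) unfolding hopf_subGP_def by (elim conjE) assumption
  moreover have "\<forall>I S P. finite I \<longrightarrow> S \<subseteq> I \<longrightarrow> P \<in> F I \<longrightarrow>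
      restr P S \<in> F S \<and> contr P S \<in> F (I - S)"
    using assms(1) unfolding hopf_subGP_def by (elim conjE) assumption
  ultimately show "is_GP I P" "S \<subseteq> I \<Longrightarrow> restr P S \<in> F S"
    "S \<subseteq> I \<Longrightarrow> contr P S \<in> F (I - S)"
    using assms(2,3) by simp_all
qed

lemma is_GP_empty: "is_GP {} P \<Longrightarrow> P = {\<lambda>_. 0}"
  by (auto simp: is_GP_def gen_perm_def submodular_on_def)

lemma ind_restr_mult_ind_contr:
  assumes "finite I" "is_GP I P" "S \<subseteq> I"
  shows "ind (restr P S) a * ind (contr P S) b =
    (if (\<forall>i. i \<notin> S \<longrightarrow> a i = 0) \<and> (\<forall>i\<in>S. b i = 0)
     then ind (max_face P S) (glue S a b) else (0::'k::field))"
proof -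
  obtain z where "submodular_on I z" "P = gen_perm I z" using assms(2) by (auto simp: is_GP_def)
  then show ?thesis
    using restr_contr_iff_glue_mem_max_face[OF assms(1) _ assms(3), of z a b] by (auto simp: ind_def)
qed

lemma indicator_relation_restr_contr:
  fixes c :: "'a pt set \<Rightarrow> 'k::field"
  assumes "finite I" "finite Q" "\<forall>P\<in>Q. is_GP I P" "S \<subseteq> I"
    and "\<And>x. (\<Sum>P\<in>Q. c P * ind P x) = 0"
  shows "(\<Sum>P\<in>Q. c P * (ind (restr P S) a * ind (contr P S) b)) = 0"
proof (cases "(\<forall>i. i \<notin> S \<longrightarrow> a i = 0) \<and> (\<forall>i\<in>S. b i = 0)")
  case True
  then show ?thesis
    using indicator_relation_max_face[OF assms(1,2,3,5), of S "glue S a b"] assms(3)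
    by (simp add: ind_restr_mult_ind_contr[OF assms(1) _ assms(4)] cong: sum.cong)
next
  case False
  have "ind (restr P S) a * ind (contr P S) b = (0::'k)" if "P \<in> Q" for P
    using ind_restr_mult_ind_contr[OF assms(1) _ assms(4), of P a b] assms(3) that
    by (simp only: if_not_P[OF False]) simp
  then show ?thesis by (simp add: sum.neutral)
qed

lemma respects_ind_relations_convolution:
  fixes g h :: "'a pt set \<Rightarrow> 'k::field"
  assumes hopf: "hopf_subGP F" and fin: "finite I" and S: "S \<subseteq> I"
    and g: "respects_ind_relations F S g" and h: "respects_ind_relations F (I - S) h"
  shows "respects_ind_relations F I (\<lambda>P. g (restr P S) * h (contr P S))"
  unfolding respects_ind_relations_def
proof (intro allI impI)
  fix Q and c :: "'a pt set \<Rightarrow> 'k"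
  assume Q: "finite Q" "Q \<subseteq> F I" and rel: "\<forall>x. (\<Sum>P\<in>Q. c P * ind P x) = 0"
  have GP: "\<forall>P\<in>Q. is_GP I P" using Q(2) hopf_subGP_is_GP[OF hopf fin] by auto
  have restr: "restr P S \<in> F S" and contr: "contr P S \<in> F (I - S)" if "P \<in> Q" for P
    using that Q(2) hopf_subGP_restr[OF hopf fin _ S] hopf_subGP_contr[OF hopf fin _ S] by auto
  \<comment> \<open>Apply g in the first tensor factor, then h in the second.\<close>
  have "(\<Sum>P\<in>Q. (c P * ind (contr P S) b) * g (restr P S)) = 0" for b
    using indicator_relation_restr_contr[OF fin Q(1) GP S, of c] rel
    by (intro respects_ind_relationsD[OF g Q(1) restr]) (simp_all add: ac_simps)
  then have "(\<Sum>P\<in>Q. (c P * g (restr P S)) * h (contr P S)) = 0"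
    by (intro respects_ind_relationsD[OF h Q(1) contr]) (simp_all add: ac_simps)
  then show "(\<Sum>P\<in>Q. c P * (g (restr P S) * h (contr P S))) = 0"
    by (simp add: ac_simps)
qed

lemma Cons_in_set_decomps:
  "S # Ss \<in> set_decomps I (Suc k) \<longleftrightarrow> S \<subseteq> I \<and> Ss \<in> set_decomps (I - S) k"
proof
  assume "S # Ss \<in> set_decomps I (Suc k)"
  then have len: "length Ss = k" and cover: "S \<union> \<Union>(set Ss) = I"
    and disj: "\<And>i j. i < Suc k \<Longrightarrow> j < Suc k \<Longrightarrow> i \<noteq> j \<Longrightarrow> (S # Ss) ! i \<inter> (S # Ss) ! j = {}"
    by (auto simp: set_decomps_def)
  have "S \<inter> T = {}" if "T \<in> set Ss" for T
    using that disj[of 0 "Suc _"] len by (auto simp: in_set_conv_nth)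
  moreover have "Ss ! i \<inter> Ss ! j = {}" if "i < k" "j < k" "i \<noteq> j" for i j
    using that disj[of "Suc i" "Suc j"] by simp
  ultimately show "S \<subseteq> I \<and> Ss \<in> set_decomps (I - S) k"
    using cover len by (auto simp: set_decomps_def)
next
  assume "S \<subseteq> I \<and> Ss \<in> set_decomps (I - S) k"
  then show "S # Ss \<in> set_decomps I (Suc k)"
    by (fastforce simp: set_decomps_def nth_Cons' nth_mem)
qed

lemma Nil_in_set_decomps: "[] \<in> set_decomps I k \<longleftrightarrow> k = 0 \<and> I = {}"
  by (auto simp: set_decomps_def)

lemma zeta_tensor_Nil [simp]: "zeta_tensor \<zeta> [] P = 1"
  by (simp add: zeta_tensor_def)

lemma zeta_tensor_Cons [simp]:
  "zeta_tensor \<zeta> (S # Ss) P = \<zeta> S (restr P S) * zeta_tensor \<zeta> Ss (contr P S)"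
  by (simp add: zeta_tensor_def)

lemma respects_ind_relations_zeta_tensor:
  fixes \<zeta> :: "'a set \<Rightarrow> 'a pt set \<Rightarrow> 'k::field"
  assumes hopf: "hopf_subGP F" and \<zeta>: "\<And>J. finite J \<Longrightarrow> respects_ind_relations F J (\<zeta> J)"
  shows "finite I \<Longrightarrow> Ss \<in> set_decomps I (length Ss) \<Longrightarrow>
    respects_ind_relations F I (zeta_tensor \<zeta> Ss)"
proof (induction Ss arbitrary: I)
  case Nil
  \<comment> \<open>The only polytope with empty ground set is the point, so every relation is trivial.\<close>
  then have point: "\<And>P. P \<in> F I \<Longrightarrow> P = {\<lambda>_. 0}"
    using hopf_subGP_is_GP[OF hopf Nil.prems(1)] is_GP_empty by (auto simp: Nil_in_set_decomps)
  show ?case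
    unfolding respects_ind_relations_def
  proof (intro allI impI)
    fix Q and c :: "'a pt set \<Rightarrow> 'k"
    assume "finite Q" "Q \<subseteq> F I" and rel: "\<forall>x. (\<Sum>P\<in>Q. c P * ind P x) = 0"
    then have "(\<Sum>P\<in>Q. c P * ind P (\<lambda>_. 0)) = (\<Sum>P\<in>Q. c P)"
      using point by (intro sum.cong) (auto simp: ind_def)
    then show "(\<Sum>P\<in>Q. c P * zeta_tensor \<zeta> [] P) = 0" using rel by simp
  qed
next
  case (Cons S Ss)
  then have S: "S \<subseteq> I" and "Ss \<in> set_decomps (I - S) (length Ss)"
    by (simp_all add: Cons_in_set_decomps)
  then have "respects_ind_relations F (I - S) (zeta_tensor \<zeta> Ss)"
    using Cons by simp
  from respects_ind_relations_convolution[OF hopf Cons.prems(1) S \<zeta> this]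
  show ?case using finite_subset[OF S Cons.prems(1)] by (simp add: fun_eq_iff)
qed

section \<open>The polynomial f_zeta\<close>

lemma finite_set_decomps: "finite I \<Longrightarrow> finite (set_decomps I k)"
  by (rule finite_subset[of _ "{xs. set xs \<subseteq> Pow I \<and> length xs = k}"])
    (auto simp: set_decomps_def intro: finite_lists_length_eq)

lemma sum_Cons_image_Sigma:
  assumes "finite A" "\<And>S. S \<in> A \<Longrightarrow> finite (B S)"
  shows "(\<Sum>Ds\<in>(\<lambda>(S, Ds). S # Ds) ` (SIGMA S:A. B S). f Ds) =
    (\<Sum>S\<in>A. \<Sum>Ds\<in>B S. f (S # Ds))"
proof -
  have "inj_on (\<lambda>(S, Ds). S # Ds) (SIGMA S:A. B S)" by (auto simp: inj_on_def)
  then have "(\<Sum>Ds\<in>(\<lambda>(S, Ds). S # Ds) ` (SIGMA S:A. B S). f Ds) =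
      (\<Sum>(S, Ds)\<in>(SIGMA S:A. B S). f (S # Ds))"
    by (simp add: sum.reindex case_prod_beta')
  also have "\<dots> = (\<Sum>S\<in>A. \<Sum>Ds\<in>B S. f (S # Ds))"
    by (rule sum.Sigma[symmetric]) (use assms in auto)
  finally show ?thesis .
qed

lemma set_decomps_0: "set_decomps I 0 = (if I = {} then {[]} else {})"
  by (auto simp: set_decomps_def)

lemma set_decomps_Suc:
  "set_decomps I (Suc k) = (\<lambda>(S, Ds). S # Ds) ` (SIGMA S:Pow I. set_decomps (I - S) k)"
proof (rule set_eqI)
  fix Ds
  show "Ds \<in> set_decomps I (Suc k) \<longleftrightarrow>
      Ds \<in> (\<lambda>(S, Ds). S # Ds) ` (SIGMA S:Pow I. set_decomps (I - S) k)"
    by (cases Ds) (auto simp: Cons_in_set_decomps Nil_in_set_decomps)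
qed

definition ord_set_parts_len :: "'a set \<Rightarrow> nat \<Rightarrow> 'a set list set" where
  "ord_set_parts_len I j = {Ss \<in> ord_set_parts I. length Ss = j}"

lemma ord_set_parts_len_iff:
  "Ss \<in> ord_set_parts_len I j \<longleftrightarrow> Ss \<in> set_decomps I j \<and> (\<forall>S\<in>set Ss. S \<noteq> {})"
  by (auto simp: ord_set_parts_len_def ord_set_parts_def set_decomps_def)

lemma ord_set_parts_len_0: "ord_set_parts_len I 0 = (if I = {} then {[]} else {})"
  by (auto simp: ord_set_parts_len_iff set_decomps_0 split: if_splits)

lemma ord_set_parts_len_Suc:
  "ord_set_parts_len I (Suc j) =
    (\<lambda>(S, Ds). S # Ds) ` (SIGMA S:Pow I - {{}}. ord_set_parts_len (I - S) j)"
proof (rule set_eqI)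
  fix Ds
  show "Ds \<in> ord_set_parts_len I (Suc j) \<longleftrightarrow>
      Ds \<in> (\<lambda>(S, Ds). S # Ds) ` (SIGMA S:Pow I - {{}}. ord_set_parts_len (I - S) j)"
    by (cases Ds) (auto simp: ord_set_parts_len_iff Cons_in_set_decomps Nil_in_set_decomps)
qed

lemma finite_ord_set_parts_len: "finite I \<Longrightarrow> finite (ord_set_parts_len I j)"
  by (rule finite_subset[OF _ finite_set_decomps[of I j]]) (auto simp: ord_set_parts_len_iff)

lemma ord_set_parts_len_eq_empty: "finite I \<Longrightarrow> card I < j \<Longrightarrow> ord_set_parts_len I j = {}"
proof (induction j arbitrary: I)
  case (Suc j)
  have "ord_set_parts_len (I - S) j = {}" if S: "S \<subseteq> I" "S \<noteq> {}" for S
  proof (rule Suc.IH)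
    have "finite S" using S Suc.prems(1) finite_subset by blast
    then have "0 < card S" "card (I - S) = card I - card S"
      using S by (auto simp: card_gt_0_iff card_Diff_subset)
    then show "card (I - S) < j"
      using Suc.prems(2) card_mono[OF Suc.prems(1) S(1)] by linarith
  qed (use Suc.prems in simp)
  then show ?case by (auto simp: ord_set_parts_len_Suc)
qed simp

text \<open>The sum over ordered set partitions into j blocks is the j-th convolution power of
  \<zeta> minus the counit; these are the coefficients of f_zeta in the binomial basis.\<close>

definition zeta_partition_sum ::
  "('a set \<Rightarrow> 'a pt set \<Rightarrow> 'k::field) \<Rightarrow> 'a set \<Rightarrow> nat \<Rightarrow> 'a pt set \<Rightarrow> 'k" where
  "zeta_partition_sum \<zeta> I j P = (\<Sum>Ss\<in>ord_set_parts_len I j. zeta_tensor \<zeta> Ss P)"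

lemma zeta_partition_sum_0: "zeta_partition_sum \<zeta> I 0 P = (if I = {} then 1 else 0)"
  by (simp add: zeta_partition_sum_def ord_set_parts_len_0)

lemma zeta_partition_sum_Suc:
  assumes "finite I"
  shows "zeta_partition_sum \<zeta> I (Suc j) P =
    (\<Sum>S\<in>Pow I - {{}}. \<zeta> S (restr P S) * zeta_partition_sum \<zeta> (I - S) j (contr P S))"
  unfolding zeta_partition_sum_def ord_set_parts_len_Suc
  using assms by (simp add: sum_Cons_image_Sigma finite_ord_set_parts_len sum_distrib_left)

lemma respects_ind_relations_zeta_partition_sum:
  fixes \<zeta> :: "'a set \<Rightarrow> 'a pt set \<Rightarrow> 'k::field"
  assumes "hopf_subGP F" "\<And>J. finite J \<Longrightarrow> respects_ind_relations F J (\<zeta> J)" "finite I"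
  shows "respects_ind_relations F I (zeta_partition_sum \<zeta> I j)"
proof -
  have "respects_ind_relations F I (\<lambda>P. \<Sum>Ss\<in>ord_set_parts_len I j. zeta_tensor \<zeta> Ss P)"
    using respects_ind_relations_zeta_tensor[OF assms]
    by (intro respects_ind_relations_sum finite_ord_set_parts_len assms(3))
      (auto simp: ord_set_parts_len_iff set_decomps_def)
  then show ?thesis by (simp add: zeta_partition_sum_def[abs_def])
qed

lemma conv_pow_0: "conv_pow \<zeta> I 0 P = (if I = {} then 1 else 0)"
  by (simp add: conv_pow_def set_decomps_0)

lemma conv_pow_Suc:
  assumes "finite I"
  shows "conv_pow \<zeta> I (Suc k) P =
    (\<Sum>S\<in>Pow I. \<zeta> S (restr P S) * conv_pow \<zeta> (I - S) k (contr P S))"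
  unfolding conv_pow_def set_decomps_Suc
  using assms by (simp add: sum_Cons_image_Sigma finite_set_decomps sum_distrib_left)

lemma sum_binomial_Suc:
  fixes a :: "nat \<Rightarrow> 'k::comm_ring_1"
  assumes "a (Suc N) = 0"
  shows "(\<Sum>j\<le>N. of_nat (Suc k choose j) * a j) =
    (\<Sum>j\<le>N. of_nat (k choose j) * a j) + (\<Sum>j\<le>N. of_nat (k choose j) * a (Suc j))"
proof -
  define g where "g j = (if j = 0 then 0 else of_nat (k choose (j - 1)) * a j)" for j
  have "(\<Sum>j\<le>Suc N. g j) = g 0 + (\<Sum>j\<le>N. g (Suc j))" by (rule sum.atMost_Suc_shift)
  then have "(\<Sum>j\<le>N. of_nat (k choose j) * a (Suc j)) = (\<Sum>j\<le>Suc N. g j)" by (simp add: g_def)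
  also have "\<dots> = (\<Sum>j\<le>N. g j)" using assms by (simp add: g_def)
  finally have "(\<Sum>j\<le>N. of_nat (k choose j) * a (Suc j)) = (\<Sum>j\<le>N. g j)" .
  moreover have "of_nat (Suc k choose j) * a j = of_nat (k choose j) * a j + g j" for j
    by (cases j) (simp_all add: g_def algebra_simps)
  ultimately show ?thesis by (simp add: sum.distrib)
qed

lemma conv_pow_binomial_expansion:
  fixes \<zeta> :: "'a set \<Rightarrow> 'a pt set \<Rightarrow> 'k::field"
  assumes hopf: "hopf_subGP F" and char: "is_character F \<zeta>"
  shows "finite I \<Longrightarrow> P \<in> F I \<Longrightarrow> card I \<le> N \<Longrightarrow>
    conv_pow \<zeta> I k P = (\<Sum>j\<le>N. of_nat (k choose j) * zeta_partition_sum \<zeta> I j P)"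
proof (induction k arbitrary: I P)
  case 0
  then show ?case by (simp add: conv_pow_0 zeta_partition_sum_0 sum.atMost_shift)
next
  case (Suc k)
  note fin = Suc.prems(1)
  let ?c = "\<lambda>I j P. of_nat (k choose j) * zeta_partition_sum \<zeta> I j P"
  \<comment> \<open>The summand S = {} of the coproduct is P itself, as \<zeta> takes the value 1 on the point.\<close>
  have "restr P {} \<in> F {}" using hopf_subGP_restr[OF hopf fin Suc.prems(2)] by simp
  then have "restr P {} = {\<lambda>_. 0}" using hopf_subGP_is_GP[OF hopf] is_GP_empty by blast
  then have "\<zeta> {} (restr P {}) = 1" using char by (simp add: is_character_def)
  moreover have "contr P {} = P" by (simp add: contr_def max_face_def)
  ultimately have "conv_pow \<zeta> I (Suc k) P =
      conv_pow \<zeta> I k P + (\<Sum>S\<in>Pow I - {{}}. \<zeta> S (restr P S) * conv_pow \<zeta> (I - S) k (contr P S))"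
    using fin by (simp add: conv_pow_Suc sum.remove[of "Pow I" "{}"])
  also have "(\<Sum>S\<in>Pow I - {{}}. \<zeta> S (restr P S) * conv_pow \<zeta> (I - S) k (contr P S)) =
      (\<Sum>S\<in>Pow I - {{}}. \<zeta> S (restr P S) * (\<Sum>j\<le>N. ?c (I - S) j (contr P S)))"
  proof (intro sum.cong refl arg_cong2[where f = "(*)"])
    fix S assume "S \<in> Pow I - {{}}"
    then show "conv_pow \<zeta> (I - S) k (contr P S) = (\<Sum>j\<le>N. ?c (I - S) j (contr P S))"
      using Suc.IH[of "I - S" "contr P S"] Suc.prems card_mono[OF fin, of "I - S"]
        hopf_subGP_contr[OF hopf fin Suc.prems(2), of S] by auto
  qed
  also have "\<dots> = (\<Sum>j\<le>N. of_nat (k choose j) * zeta_partition_sum \<zeta> I (Suc j) P)"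
    by (simp add: zeta_partition_sum_Suc[OF fin] sum_distrib_left sum.swap[of _ "Pow I - {{}}"]
        mult.left_commute)
  also have "conv_pow \<zeta> I k P + \<dots> = (\<Sum>j\<le>N. of_nat (Suc k choose j) * zeta_partition_sum \<zeta> I j P)"
    using Suc.IH[OF Suc.prems] ord_set_parts_len_eq_empty[OF fin, of "Suc N"] Suc.prems(3)
    by (simp add: sum_binomial_Suc zeta_partition_sum_def)
  finally show ?case .
qed

definition binomial_poly :: "nat \<Rightarrow> 'k::field_char_0 poly" where
  "binomial_poly j = smult (inverse (fact j)) (\<Prod>i<j. [:- of_nat i, 1:])"

lemma poly_binomial_poly:
  "poly (binomial_poly j) (of_nat k) = (of_nat (k choose j) :: 'k::field_char_0)"
proof -
  have "poly (binomial_poly j) (of_nat k) = inverse (fact j) * (\<Prod>i<j. (of_nat k :: 'k) - of_nat i)"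
    by (simp add: binomial_poly_def poly_prod)
  also have "\<dots> = of_nat k gchoose j"
    by (simp add: gbinomial_prod_rev lessThan_atLeast0 field_simps)
  finally show ?thesis by (simp add: binomial_gbinomial)
qed

lemma poly_eqI_of_nat:
  fixes p q :: "'k::field_char_0 poly"
  assumes "\<And>k::nat. k \<ge> 1 \<Longrightarrow> poly p (of_nat k) = poly q (of_nat k)"
  shows "p = q"
proof (rule ccontr)
  assume "p \<noteq> q"
  then have "finite {x. poly (p - q) x = 0}" by (intro poly_roots_finite) simp
  moreover have "of_nat ` {1..} \<subseteq> {x. poly (p - q) x = (0::'k)}" using assms by auto
  ultimately have "finite (of_nat ` {1::nat..} :: 'k set)" by (rule finite_subset[rotated])
  moreover have "inj_on (of_nat :: nat \<Rightarrow> 'k) {1..}" by (simp add: inj_on_def)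
  ultimately have "finite {1::nat..}" by (rule finite_imageD)
  then show False using infinite_Ici[of "1::nat"] by simp
qed

lemma f_zeta_eq:
  fixes \<zeta> :: "'a set \<Rightarrow> 'a pt set \<Rightarrow> 'k::field_char_0"
  assumes "hopf_subGP F" "is_character F \<zeta>" "finite I" "P \<in> F I"
  shows "f_zeta \<zeta> I P = (\<Sum>j\<le>card I. smult (zeta_partition_sum \<zeta> I j P) (binomial_poly j))"
  unfolding f_zeta_def
proof (rule the_equality)
  show "\<forall>k::nat. k \<ge> 1 \<longrightarrow>
      poly (\<Sum>j\<le>card I. smult (zeta_partition_sum \<zeta> I j P) (binomial_poly j)) (of_nat k) =
      conv_pow \<zeta> I k P"
    using conv_pow_binomial_expansion[OF assms order_refl]
    by (simp add: poly_sum poly_binomial_poly mult.commute)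
  then show "p = (\<Sum>j\<le>card I. smult (zeta_partition_sum \<zeta> I j P) (binomial_poly j))"
    if "\<forall>k::nat. k \<ge> 1 \<longrightarrow> poly p (of_nat k) = conv_pow \<zeta> I k P" for p
    using that by (intro poly_eqI_of_nat) simp
qed

theorem mainTheorem4:
  fixes F :: "'a set \<Rightarrow> ('a \<Rightarrow> real) set set"
    and \<zeta> :: "'a set \<Rightarrow> ('a \<Rightarrow> real) set \<Rightarrow> 'k::field_char_0"
  assumes "hopf_subGP F"
    and "is_character F \<zeta>"
    and "\<And>J. finite J \<Longrightarrow> strong_valuation F J (*) (\<zeta> J)"
    and "finite I"
  shows "strong_valuation F I smult (f_zeta \<zeta> I)
       \<and> strong_valuation F I (\<lambda>a g. \<lambda>\<alpha>. a * g \<alpha>) (Phi_zeta \<zeta> I)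
       \<and> strong_valuation F I (\<lambda>a g. \<lambda>Ss. a * g Ss) (O_zeta \<zeta> I)"
proof -
  have \<zeta>: "\<And>J. finite J \<Longrightarrow> respects_ind_relations F J (\<zeta> J)"
    using assms(3) by (rule strong_valuation_imp_respects_ind_relations)
  have tensor: "respects_ind_relations F I (zeta_tensor \<zeta> Ss)" if "Ss \<in> ord_set_parts I" for Ss
    using respects_ind_relations_zeta_tensor[OF assms(1) \<zeta> assms(4)] that
    by (simp add: ord_set_parts_def)
  have "strong_valuation F I smult (f_zeta \<zeta> I)"
    using respects_ind_relations_zeta_partition_sum[OF assms(1) \<zeta> assms(4)] f_zeta_eq[OF assms(1,2,4)]
    by (rule strong_valuation_poly_combination)
  moreover have "finite {Ss \<in> ord_set_parts I. map card Ss = \<alpha>}" for \<alpha>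
    by (rule finite_subset[OF _ finite_ord_set_parts_len[OF assms(4), of "length \<alpha>"]])
      (auto simp: ord_set_parts_len_def)
  then have "respects_ind_relations F I (\<lambda>P. Phi_zeta \<zeta> I P \<alpha>)" for \<alpha>
    unfolding Phi_zeta_def using tensor by (intro respects_ind_relations_sum) auto
  then have "strong_valuation F I (\<lambda>a g. \<lambda>\<alpha>. a * g \<alpha>) (Phi_zeta \<zeta> I)"
    using strong_valuation_pointwise[of F I "\<lambda>\<alpha> P. Phi_zeta \<zeta> I P \<alpha>"] by simp
  moreover have "respects_ind_relations F I (\<lambda>P. O_zeta \<zeta> I P Ss)" for Ss
    using tensor by (cases "Ss \<in> ord_set_parts I") (auto simp: O_zeta_def respects_ind_relations_def)
  then have "strong_valuation F I (\<lambda>a g. \<lambda>Ss. a * g Ss) (O_zeta \<zeta> I)"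
    using strong_valuation_pointwise[of F I "\<lambda>Ss P. O_zeta \<zeta> I P Ss"] by simp
  ultimately show ?thesis by blast
qed

end
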